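(* Let $\mathbf{X}\subseteq\mathbb{N}^n$ be hybridlinear. The following are equivalent: (1) $\mathbf{X}$ is directed hybridlinear; (2) there is a representation $\mathbf{X}=\{\mathbf{b}_1,\dots,\mathbf{b}_r\}+\mathbb{N}(\mathbf{F})$ with $(\mathbf{b}_i+\mathbb{N}(\mathbf{F}))\cap(\mathbf{b}_j+\mathbb{N}(\mathbf{F}))\neq\emptyset$ for all $1\le i,j\le r$; (3) there is a representation $\mathbf{X}=\{\mathbf{b}_1,\dots,\mathbf{b}_r\}+\mathbb{N}(\mathbf{F})$ with $\mathbf{b}_i-\mathbf{b}_j\in\mathbb{Z}(\mathbf{F})$ for all $1\le i,j\le r$.
   Context: Hybridlinear: $\mathbf{B}+\mathbb{N}(\mathbf{F})$ with $\mathbf{B},\mathbf{F}\subseteq\mathbb{N}^n$ finite; $\mathbb{Z}(\mathbf{F})$ is the set of integer linear combinations of $\mathbf{F}$. Preservants: $\mathbf{P}_{\mathbf{X}}=\{\mathbf{p}\in\mathbb{Z}^n\mid\mathbf{X}+\mathbf{p}\subseteq\mathbf{X}\}$; $\mathbf{x}\le_{\mathbf{P}}\mathbf{y}$ iff $\mathbf{y}-\mathbf{x}\in\mathbf{P}$. A well-quasi-order $(\mathbf{X},\le)$ is directed if any two elements have a common upper bound in $\mathbf{X}$. $\mathbf{X}$ is directed hybridlinear if $(\mathbf{X},\le_{\mathbf{P}_{\mathbf{X}}})$ is a directed well-quasi-order (well-founded, every subset has finitely many minimal elements). *)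

theory Defs
  imports "HOL-Analysis.Finite_Cartesian_Product"
begin

text \<open>Vectors of Z^n are modelled as int ^ 'n for a finite index type 'n (n = CARD('n)).
  N^n is the set of vectors with nonnegative entries.\<close>

definition natvecs :: "(int ^ 'n::finite) set" where
  "natvecs = {x. \<forall>i. 0 \<le> x $ i}"

definition smul :: "int \<Rightarrow> int ^ 'n::finite \<Rightarrow> int ^ 'n" where
  "smul c v = (\<chi> i. c * v $ i)"

definition Nspan :: "(int ^ 'n::finite) set \<Rightarrow> (int ^ 'n) set" where
  "Nspan F = {(\<Sum>f\<in>F. smul (int (c f)) f) | c. True}"

definition Zspan :: "(int ^ 'n::finite) set \<Rightarrow> (int ^ 'n) set" where
  "Zspan F = {(\<Sum>f\<in>F. smul (c f) f) | c. True}"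

definition msum :: "(int ^ 'n::finite) set \<Rightarrow> (int ^ 'n) set \<Rightarrow> (int ^ 'n) set" where
  "msum A C = {a + c | a c. a \<in> A \<and> c \<in> C}"

definition hybridlinear :: "(int ^ 'n::finite) set \<Rightarrow> bool" where
  "hybridlinear X \<longleftrightarrow> (\<exists>B F. finite B \<and> finite F \<and> B \<subseteq> natvecs \<and> F \<subseteq> natvecs
      \<and> X = msum B (Nspan F))"

definition preservants :: "(int ^ 'n::finite) set \<Rightarrow> (int ^ 'n) set" where
  "preservants X = {p. \<forall>x\<in>X. x + p \<in> X}"

definition leP :: "(int ^ 'n::finite) set \<Rightarrow> int ^ 'n \<Rightarrow> int ^ 'n \<Rightarrow> bool" where
  "leP P x y \<longleftrightarrow> y - x \<in> P"

definition directed_wqo_on :: "'a set \<Rightarrow> ('a \<Rightarrow> 'a \<Rightarrow> bool) \<Rightarrow> bool" where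
  "directed_wqo_on X le \<longleftrightarrow>
     wf {(x, y). x \<in> X \<and> y \<in> X \<and> le x y \<and> \<not> le y x}
   \<and> (\<forall>S \<subseteq> X. finite {m \<in> S. \<forall>y\<in>S. le y m \<longrightarrow> le m y})
   \<and> (\<forall>x\<in>X. \<forall>y\<in>X. \<exists>z\<in>X. le x z \<and> le y z)"

definition directed_hybridlinear :: "(int ^ 'n::finite) set \<Rightarrow> bool" where
  "directed_hybridlinear X \<longleftrightarrow> directed_wqo_on X (leP (preservants X))"

end

theory Submission
  imports Defs "HOL-Library.Infinite_Set"
begin

text \<open>Preservants of a nonempty subset of \<open>\<nat>\<^sup>n\<close> lie in \<open>\<nat>\<^sup>n\<close>, so \<open>\<le>\<^sub>P\<close> is a partial
  order contained in the componentwise order; it is well-founded, and for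
  \<open>X = B + \<nat>(F)\<close> Dickson's lemma applied to the coefficient vectors shows that every
  subset has finitely many minimal elements. Directedness is thus the real issue.
  If the translates \<open>b + \<nat>(F)\<close> pairwise meet, a common point of two translates, shifted
  by the \<open>\<nat>(F)\<close>-parts of two elements, is a common upper bound. Conversely, if \<open>X\<close> is
  directed, the differences \<open>z - b\<close>, \<open>z - b'\<close> to common upper bounds \<open>z\<close> of base
  points are preservants; adjoining them to \<open>F\<close> does not change \<open>X\<close> and puts \<open>b - b'\<close>
  into \<open>\<int>(F)\<close>. Finally two translates meet iff \<open>b - b' \<in> \<int>(F)\<close>, as
  \<open>\<int>(F) = \<nat>(F) - \<nat>(F)\<close>.\<close>

lemma smul_add: "smul (a + b) v = smul a v + smul b v"
  unfolding smul_def by (simp add: vec_eq_iff algebra_simps)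

lemma smul_diff: "smul (a - b) v = smul a v - smul b v"
  unfolding smul_def by (simp add: vec_eq_iff algebra_simps)

lemma smul_0 [simp]: "smul 0 v = 0"
  unfolding smul_def by (simp add: vec_eq_iff)

lemma smul_1 [simp]: "smul 1 v = v"
  unfolding smul_def by (simp add: vec_eq_iff)

lemma smul_nth [simp]: "smul c v $ i = c * v $ i"
  unfolding smul_def by simp

lemma msum_iff: "x \<in> msum A C \<longleftrightarrow> (\<exists>a\<in>A. \<exists>c\<in>C. x = a + c)"
  unfolding msum_def by auto

subsection \<open>Spans\<close>

lemma NspanI: "(\<Sum>f\<in>F. smul (int (c f)) f) \<in> Nspan F"
  unfolding Nspan_def by blast

lemma ZspanI: "(\<Sum>f\<in>F. smul (c f) f) \<in> Zspan F"
  unfolding Zspan_def by blast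

lemma Nspan_add: "u \<in> Nspan F \<Longrightarrow> v \<in> Nspan F \<Longrightarrow> u + v \<in> Nspan F"
proof -
  assume "u \<in> Nspan F" "v \<in> Nspan F"
  then obtain c d where u: "u = (\<Sum>f\<in>F. smul (int (c f)) f)"
    and v: "v = (\<Sum>f\<in>F. smul (int (d f)) f)"
    unfolding Nspan_def by auto
  have "u + v = (\<Sum>f\<in>F. smul (int (c f + d f)) f)"
    unfolding u v sum.distrib[symmetric] by (simp add: smul_add)
  then show ?thesis by (simp only: NspanI)
qed

lemma Nspan_0: "0 \<in> Nspan F"
  using NspanI[where c="\<lambda>_. 0"] by simp

lemma Nspan_mem: "finite F \<Longrightarrow> u \<in> F \<Longrightarrow> u \<in> Nspan F"
proof -
  assume "finite F" "u \<in> F"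
  have "(\<Sum>f\<in>F. smul (int (if f = u then 1 else 0)) f) = (\<Sum>f\<in>F. if f = u then u else 0)"
    by (rule sum.cong) auto
  also have "\<dots> = u" using \<open>finite F\<close> \<open>u \<in> F\<close> by simp
  finally have sum_eq: "(\<Sum>f\<in>F. smul (int (if f = u then 1 else 0)) f) = u" .
  show ?thesis by (subst sum_eq[symmetric]) (rule NspanI)
qed

lemma Nspan_diff_of_coeff_le:
  assumes "\<forall>f\<in>F. c f \<le> d f"
  shows "(\<Sum>f\<in>F. smul (int (d f)) f) - (\<Sum>f\<in>F. smul (int (c f)) f) \<in> Nspan F"
proof -
  have "(\<Sum>f\<in>F. smul (int (d f)) f) - (\<Sum>f\<in>F. smul (int (c f)) f)
      = (\<Sum>f\<in>F. smul (int (d f - c f)) f)"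
    unfolding sum_subtractf[symmetric] smul_diff[symmetric]
    by (rule sum.cong) (use assms in \<open>auto simp: of_nat_diff\<close>)
  then show ?thesis by (simp add: NspanI)
qed

text \<open>No finiteness of \<open>F\<close> is needed: for infinite \<open>F\<close> all sums are \<open>0\<close>.\<close>
lemma Nspan_subset_monoid:
  assumes zero: "0 \<in> S" and add: "\<And>x y. x \<in> S \<Longrightarrow> y \<in> S \<Longrightarrow> x + y \<in> S" and "F \<subseteq> S"
  shows "Nspan F \<subseteq> S"
proof
  have smul_in: "smul (int k) f \<in> S" if "f \<in> S" for k f
    using that by (induction k) (simp_all add: zero smul_add add)
  have sum_in: "(\<Sum>f\<in>G. smul (int (c f)) f) \<in> S" if "G \<subseteq> S" for G c
  proof (cases "finite G")
    case True
    then show ?thesis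
      using that by (induction G rule: finite_induct) (simp_all add: zero add smul_in)
  qed (simp add: zero)
  fix v assume "v \<in> Nspan F"
  then show "v \<in> S" using sum_in \<open>F \<subseteq> S\<close> unfolding Nspan_def by blast
qed

lemma Nspan_mono: "finite G \<Longrightarrow> F \<subseteq> G \<Longrightarrow> Nspan F \<subseteq> Nspan G"
  by (rule Nspan_subset_monoid) (auto intro: Nspan_0 Nspan_add Nspan_mem)

lemma Nspan_natvecs: "F \<subseteq> natvecs \<Longrightarrow> Nspan F \<subseteq> natvecs"
  by (rule Nspan_subset_monoid) (auto simp: natvecs_def)

lemma msum_Nspan_natvecs:
  assumes "B \<subseteq> natvecs" "F \<subseteq> natvecs"
  shows "msum B (Nspan F) \<subseteq> natvecs"
proof
  fix x assume "x \<in> msum B (Nspan F)"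
  then obtain b v where "b \<in> B" "v \<in> Nspan F" "x = b + v" unfolding msum_iff by blast
  moreover have "v \<in> natvecs" using Nspan_natvecs[OF assms(2)] \<open>v \<in> Nspan F\<close> by blast
  ultimately show "x \<in> natvecs" using assms(1) unfolding natvecs_def by auto
qed

lemma Zspan_eq_Nspan_diff: "Zspan F = {u - v | u v. u \<in> Nspan F \<and> v \<in> Nspan F}"
proof (intro set_eqI iffI)
  fix w assume "w \<in> Zspan F"
  then obtain c where w: "w = (\<Sum>f\<in>F. smul (c f) f)" unfolding Zspan_def by auto
  have "w = (\<Sum>f\<in>F. smul (int (nat (c f))) f) - (\<Sum>f\<in>F. smul (int (nat (- c f))) f)"
    unfolding w sum_subtractf[symmetric] smul_diff[symmetric]
    by (rule sum.cong) (auto intro: arg_cong[where f="\<lambda>x. smul x _"])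
  then show "w \<in> {u - v | u v. u \<in> Nspan F \<and> v \<in> Nspan F}"
    using NspanI[where c="\<lambda>f. nat (c f)"] NspanI[where c="\<lambda>f. nat (- c f)"] by blast
next
  fix w assume "w \<in> {u - v | u v. u \<in> Nspan F \<and> v \<in> Nspan F}"
  then obtain c d where "w = (\<Sum>f\<in>F. smul (int (c f)) f) - (\<Sum>f\<in>F. smul (int (d f)) f)"
    unfolding Nspan_def by auto
  also have "\<dots> = (\<Sum>f\<in>F. smul (int (c f) - int (d f)) f)"
    unfolding sum_subtractf[symmetric] smul_diff by simp
  finally show "w \<in> Zspan F" by (simp add: ZspanI)
qed

lemma translates_intersect_iff_diff_Zspan:
  "msum {b} (Nspan F) \<inter> msum {b'} (Nspan F) \<noteq> {} \<longleftrightarrow> b - b' \<in> Zspan F"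
proof -
  have "msum {b} (Nspan F) \<inter> msum {b'} (Nspan F) \<noteq> {}
      \<longleftrightarrow> (\<exists>u\<in>Nspan F. \<exists>v\<in>Nspan F. b + u = b' + v)"
    unfolding disjoint_iff msum_iff by auto
  also have "\<dots> \<longleftrightarrow> (\<exists>u\<in>Nspan F. \<exists>v\<in>Nspan F. b - b' = v - u)"
    by (simp add: algebra_simps)
  finally show ?thesis unfolding Zspan_eq_Nspan_diff by blast
qed

subsection \<open>Preservants\<close>

lemma preservants_0: "0 \<in> preservants X"
  unfolding preservants_def by simp

lemma preservants_add:
  assumes "p \<in> preservants X" "q \<in> preservants X"
  shows "p + q \<in> preservants X"
proof (unfold preservants_def, intro CollectI ballI)
  fix x assume "x \<in> X"
  then have "x + p + q \<in> X" using assms unfolding preservants_def by blast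
  then show "x + (p + q) \<in> X" by (simp add: add.assoc)
qed

lemma Nspan_subset_preservants: "F \<subseteq> preservants X \<Longrightarrow> Nspan F \<subseteq> preservants X"
  by (rule Nspan_subset_monoid) (simp_all add: preservants_0 preservants_add)

lemma Nspan_subset_preservants_msum: "Nspan F \<subseteq> preservants (msum B (Nspan F))"
proof (unfold preservants_def, intro subsetI CollectI ballI)
  fix p x assume "p \<in> Nspan F" "x \<in> msum B (Nspan F)"
  then obtain b u where "b \<in> B" "u \<in> Nspan F" "x + p = b + (u + p)"
    unfolding msum_iff by (auto simp: add.assoc)
  then show "x + p \<in> msum B (Nspan F)" using \<open>p \<in> Nspan F\<close> Nspan_add unfolding msum_iff by blast
qed

lemma preservants_natvecs:
  assumes "X \<subseteq> natvecs" "X \<noteq> {}"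
  shows "preservants X \<subseteq> natvecs"
proof
  fix p assume p: "p \<in> preservants X"
  obtain x where "x \<in> X" using assms(2) by blast
  have iter: "x + smul (int k) p \<in> X" for k
  proof (induction k)
    case (Suc k)
    then have "(x + smul (int k) p) + p \<in> X" using p unfolding preservants_def by blast
    then show ?case by (simp add: smul_add algebra_simps)
  qed (simp add: \<open>x \<in> X\<close>)
  show "p \<in> natvecs" unfolding natvecs_def
  proof (intro CollectI allI)
    fix i
    \<comment> \<open>a negative entry of \<open>p\<close> would make \<open>x + (x$i + 1) p\<close> leave \<open>\<nat>\<^sup>n\<close>\<close>
    let ?k = "nat (x $ i) + 1"
    have "0 \<le> x $ i" "0 \<le> x $ i + int ?k * p $ i"
      using \<open>x \<in> X\<close> iter[of ?k] assms(1) unfolding natvecs_def by auto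
    show "0 \<le> p $ i"
    proof (rule ccontr)
      assume "\<not> 0 \<le> p $ i"
      then have "int ?k * p $ i \<le> int ?k * (-1)" by (intro mult_left_mono) auto
      then show False using \<open>0 \<le> x $ i\<close> \<open>0 \<le> x $ i + int ?k * p $ i\<close> by simp
    qed
  qed
qed

lemma subset_msum_Nspan: "B \<subseteq> msum B (Nspan F)"
proof
  fix b assume "b \<in> B"
  then show "b \<in> msum B (Nspan F)" unfolding msum_iff using Nspan_0 by force
qed

lemma msum_Nspan_extend:
  assumes X: "X = msum B (Nspan F)" and "finite G" "F \<subseteq> G" "G \<subseteq> preservants X"
  shows "X = msum B (Nspan G)"
proof
  show "X \<subseteq> msum B (Nspan G)"
    using Nspan_mono[OF \<open>finite G\<close> \<open>F \<subseteq> G\<close>] unfolding X msum_def by blast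
  have "B \<subseteq> X" unfolding X by (rule subset_msum_Nspan)
  moreover have "Nspan G \<subseteq> preservants X"
    using \<open>G \<subseteq> preservants X\<close> by (rule Nspan_subset_preservants)
  ultimately show "msum B (Nspan G) \<subseteq> X"
    unfolding msum_def preservants_def by blast
qed

subsection \<open>The order induced by preservants\<close>

lemma leP_antisym:
  assumes "P \<subseteq> natvecs" "leP P x y" "leP P y x"
  shows "x = y"
proof -
  have "y - x \<in> natvecs" "x - y \<in> natvecs" using assms unfolding leP_def by auto
  then show ?thesis unfolding natvecs_def by (auto simp: vec_eq_iff intro: antisym)
qed

lemma wf_strict_leP:
  assumes "X \<subseteq> natvecs" "P \<subseteq> natvecs"
  shows "wf {(x, y). x \<in> X \<and> y \<in> X \<and> leP P x y \<and> \<not> leP P y x}"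
proof (rule wf_subset[OF wf_measure[of "\<lambda>x. nat (\<Sum>i\<in>UNIV. x $ i)"]], clarify)
  fix x y assume "x \<in> X" "y \<in> X" "leP P x y" "\<not> leP P y x"
  then have "y - x \<in> natvecs" "y \<noteq> x"
    using assms(2) unfolding leP_def by auto
  then obtain j where "(y - x) $ j \<noteq> 0" by (auto simp: vec_eq_iff)
  then have "0 < (\<Sum>i\<in>UNIV. (y - x) $ i)"
    using \<open>y - x \<in> natvecs\<close> by (intro sum_pos2[of UNIV j]) (auto simp: natvecs_def order_le_less)
  moreover have "0 \<le> (\<Sum>i\<in>UNIV. x $ i)"
    using \<open>x \<in> X\<close> assms(1) unfolding natvecs_def by (auto intro!: sum_nonneg)
  ultimately show "(x, y) \<in> measure (\<lambda>x. nat (\<Sum>i\<in>UNIV. x $ i))"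
    by (simp add: sum_subtractf)
qed

lemma incseq_subseq_nat:
  fixes u :: "nat \<Rightarrow> nat"
  shows "\<exists>g. strict_mono g \<and> incseq (\<lambda>k. u (g k))"
proof -
  obtain f where f: "strict_mono f" "monoseq (\<lambda>n. u (f n))" using seq_monosub by blast
  show ?thesis
  proof (cases "incseq (\<lambda>n. u (f n))")
    case False
    then have dec: "decseq (\<lambda>n. u (f n))" using f(2) unfolding monoseq_iff by blast
    \<comment> \<open>a decreasing sequence of naturals is constant from the position of its minimum on\<close>
    obtain k0 where k0: "\<And>n. u (f k0) \<le> u (f n)"
      using ex_has_least_nat[where P="\<lambda>_. True" and k=0 and m="\<lambda>n. u (f n)"] by auto
    have "u (f (k + k0)) = u (f k0)" for k
      using k0[of "k + k0"] dec[unfolded decseq_def, rule_format, of k0 "k + k0"] by simp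
    then have "incseq (\<lambda>k. u (f (k + k0)))" by (simp add: incseq_def)
    moreover have "strict_mono (\<lambda>k. f (k + k0))" using f(1) by (simp add: strict_mono_def)
    ultimately show ?thesis by blast
  qed (use f in blast)
qed

lemma incseq_subseq_finite_family:
  fixes t :: "'i \<Rightarrow> nat \<Rightarrow> nat"
  assumes "finite I"
  shows "\<exists>g. strict_mono g \<and> (\<forall>i\<in>I. incseq (\<lambda>k. t i (g k)))"
  using assms
proof (induction I rule: finite_induct)
  case empty
  show ?case by (rule exI[of _ id]) (simp add: strict_mono_def)
next
  case (insert a I)
  then obtain g where g: "strict_mono g" "\<forall>i\<in>I. incseq (\<lambda>k. t i (g k))" by blast
  obtain h where h: "strict_mono h" "incseq (\<lambda>k. t a (g (h k)))"
    using incseq_subseq_nat[of "\<lambda>k. t a (g k)"] by blast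
  have "incseq (\<lambda>k. t i (g (h k)))" if "i \<in> I" for i
  proof -
    have "incseq (\<lambda>k. t i (g k))" "mono h" using g(2) that strict_mono_mono[OF h(1)] by auto
    then show ?thesis unfolding incseq_def mono_def by simp
  qed
  moreover have "strict_mono (\<lambda>k. g (h k))"
    using strict_mono_o[OF g(1) h(1)] by (simp add: comp_def)
  ultimately show ?case using h(2) by blast
qed

text \<open>Dickson's lemma for \<open>B + \<nat>(F)\<close>.\<close>
lemma msum_Nspan_good_pair:
  fixes s :: "nat \<Rightarrow> int ^ 'n::finite"
  assumes "finite B" "finite F" "\<And>k. s k \<in> msum B (Nspan F)"
  obtains i j where "i < j" "s j - s i \<in> Nspan F"
proof -
  have "\<forall>k. \<exists>b c. b \<in> B \<and> s k = b + (\<Sum>f\<in>F. smul (int (c f)) f)"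
    using assms(3) unfolding msum_iff Nspan_def by blast
  then obtain b c where bc: "\<And>k. b k \<in> B" "\<And>k. s k = b k + (\<Sum>f\<in>F. smul (int (c k f)) f)"
    by metis
  obtain g where g: "strict_mono g" "\<forall>f\<in>F. incseq (\<lambda>k. c (g k) f)"
    using incseq_subseq_finite_family[OF assms(2), of "\<lambda>f k. c k f"] by blast
  have "finite (range (\<lambda>k. b (g k)))" using bc(1) assms(1) by (metis finite_subset image_subsetI)
  then obtain i where "infinite {k. b (g k) = b (g i)}"
    using pigeonhole_infinite[of "UNIV :: nat set"] by auto
  then obtain j where j: "i < j" "b (g j) = b (g i)"
    unfolding infinite_nat_iff_unbounded by blast
  have "\<forall>f\<in>F. c (g i) f \<le> c (g j) f" using g(2) \<open>i < j\<close> by (simp add: incseq_def)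
  then have "s (g j) - s (g i) \<in> Nspan F"
    using Nspan_diff_of_coeff_le unfolding bc(2) j(2) by simp
  moreover have "g i < g j" using g(1) \<open>i < j\<close> by (simp add: strict_mono_def)
  ultimately show ?thesis using that by blast
qed

lemma finite_minimal_elements_msum_Nspan:
  assumes "finite B" "finite F" "S \<subseteq> msum B (Nspan F)"
    and le_antisym: "\<And>x y. le x y \<Longrightarrow> le y x \<Longrightarrow> x = y"
    and Nspan_le: "\<And>x y. y - x \<in> Nspan F \<Longrightarrow> le x y"
  shows "finite {m \<in> S. \<forall>y\<in>S. le y m \<longrightarrow> le m y}" (is "finite ?M")
proof (rule ccontr)
  assume "infinite ?M"
  then obtain s :: "nat \<Rightarrow> _" where s: "inj s" "range s \<subseteq> ?M"
    using infinite_countable_subset by blast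
  have "s k \<in> msum B (Nspan F)" for k using s(2) assms(3) by blast
  then obtain i j where "i < j" "s j - s i \<in> Nspan F"
    using msum_Nspan_good_pair[OF assms(1,2)] by blast
  from \<open>s j - s i \<in> Nspan F\<close> have "le (s i) (s j)" by (rule Nspan_le)
  moreover have "s j \<in> ?M" "s i \<in> S" using s(2) by auto
  ultimately have "le (s j) (s i)" by blast
  with \<open>le (s i) (s j)\<close> have "s i = s j" by (rule le_antisym)
  then show False using s(1) \<open>i < j\<close> by (simp add: inj_eq)
qed

subsection \<open>The characterisation\<close>

lemma directed_imp_Zspan_representation:
  assumes B: "finite B" "B \<subseteq> natvecs" and F: "finite F" "F \<subseteq> natvecs"
    and X: "X = msum B (Nspan F)"
    and dir: "\<forall>x\<in>X. \<forall>y\<in>X. \<exists>z\<in>X. leP (preservants X) x z \<and> leP (preservants X) y z"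
  shows "\<exists>F'. finite F' \<and> F' \<subseteq> natvecs \<and> X = msum B (Nspan F')
           \<and> (\<forall>b\<in>B. \<forall>b'\<in>B. b - b' \<in> Zspan F')"
proof -
  let ?P = "preservants X"
  have BX: "B \<subseteq> X" unfolding X by (rule subset_msum_Nspan)
  have "\<forall>b\<in>B. \<forall>b'\<in>B. \<exists>z. z - b \<in> ?P \<and> z - b' \<in> ?P"
    using dir BX unfolding leP_def by blast
  then obtain z where z: "\<And>b b'. b \<in> B \<Longrightarrow> b' \<in> B \<Longrightarrow> z b b' - b \<in> ?P \<and> z b b' - b' \<in> ?P"
    by metis
  define G where "G = (\<lambda>(b, b'). z b b' - b) ` (B \<times> B) \<union> (\<lambda>(b, b'). z b b' - b') ` (B \<times> B)"
  define F' where "F' = F \<union> G"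
  have "finite F'" unfolding F'_def G_def using B F by auto
  have GP: "G \<subseteq> ?P" unfolding G_def using z by auto
  have "G \<subseteq> natvecs"
  proof (cases "B = {}")
    case False
    then have "X \<noteq> {}" using BX by blast
    moreover have "X \<subseteq> natvecs" unfolding X using B(2) F(2) by (rule msum_Nspan_natvecs)
    ultimately show ?thesis using GP preservants_natvecs by blast
  qed (simp add: G_def)
  then have "F' \<subseteq> natvecs" using F(2) by (simp add: F'_def)
  moreover have "X = msum B (Nspan F')"
  proof (rule msum_Nspan_extend[OF X \<open>finite F'\<close>])
    have "F \<subseteq> ?P"
      using Nspan_mem[OF F(1)] Nspan_subset_preservants_msum[of F B] unfolding X by blast
    then show "F' \<subseteq> ?P" using GP by (simp add: F'_def)
  qed (simp add: F'_def)
  moreover have "b - b' \<in> Zspan F'" if "b \<in> B" "b' \<in> B" for b b'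
  proof -
    have "z b b' - b' \<in> F'" "z b b' - b \<in> F'" unfolding F'_def G_def using that by force+
    then have "(z b b' - b') - (z b b' - b) \<in> Zspan F'"
      unfolding Zspan_eq_Nspan_diff using Nspan_mem[OF \<open>finite F'\<close>] by blast
    then show ?thesis by simp
  qed
  ultimately show ?thesis using \<open>finite F'\<close> by blast
qed

lemma directed_if_translates_intersect:
  assumes X: "X = msum B (Nspan F)"
    and meet: "\<forall>b\<in>B. \<forall>b'\<in>B. msum {b} (Nspan F) \<inter> msum {b'} (Nspan F) \<noteq> {}"
  shows "\<forall>x\<in>X. \<forall>y\<in>X. \<exists>z\<in>X. leP (preservants X) x z \<and> leP (preservants X) y z"
proof (intro ballI)
  fix x y assume "x \<in> X" "y \<in> X"
  then obtain b u b' v where "b \<in> B" "b' \<in> B" "u \<in> Nspan F" "v \<in> Nspan F"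
    and xy: "x = b + u" "y = b' + v"
    unfolding X msum_iff by blast
  have "msum {b} (Nspan F) \<inter> msum {b'} (Nspan F) \<noteq> {}" using meet \<open>b \<in> B\<close> \<open>b' \<in> B\<close> by blast
  then obtain u' v' where "u' \<in> Nspan F" "v' \<in> Nspan F" and w: "b + u' = b' + v'"
    unfolding disjoint_iff msum_iff by auto
  define z where "z = b + (u' + u + v)"
  have "u' + u + v \<in> Nspan F"
    using \<open>u \<in> Nspan F\<close> \<open>v \<in> Nspan F\<close> \<open>u' \<in> Nspan F\<close> by (intro Nspan_add)
  then have "z \<in> X" unfolding X msum_iff z_def using \<open>b \<in> B\<close> by blast
  have "z = b' + (v' + u + v)" unfolding z_def by (simp add: add.assoc[symmetric] w)
  then have "z - x = u' + v" "z - y = v' + u"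
    unfolding xy by (simp_all add: z_def algebra_simps)
  moreover have "u' + v \<in> Nspan F" "v' + u \<in> Nspan F"
    using \<open>u \<in> Nspan F\<close> \<open>v \<in> Nspan F\<close> \<open>u' \<in> Nspan F\<close> \<open>v' \<in> Nspan F\<close>
    by (simp_all add: Nspan_add)
  ultimately have "leP (preservants X) x z" "leP (preservants X) y z"
    using Nspan_subset_preservants_msum[of F B] unfolding leP_def X by auto
  then show "\<exists>z\<in>X. leP (preservants X) x z \<and> leP (preservants X) y z" using \<open>z \<in> X\<close> by blast
qed

lemma directed_hybridlinear_if_translates_intersect:
  assumes "finite B" "finite F" "B \<subseteq> natvecs" "F \<subseteq> natvecs" and X: "X = msum B (Nspan F)"
    and meet: "\<forall>b\<in>B. \<forall>b'\<in>B. msum {b} (Nspan F) \<inter> msum {b'} (Nspan F) \<noteq> {}"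
  shows "directed_hybridlinear X"
proof (cases "X = {}")
  case False
  have "X \<subseteq> natvecs" unfolding X using assms(3,4) by (rule msum_Nspan_natvecs)
  then have P: "preservants X \<subseteq> natvecs" using False by (rule preservants_natvecs)
  have "finite {m \<in> S. \<forall>y\<in>S. leP (preservants X) y m \<longrightarrow> leP (preservants X) m y}"
    if "S \<subseteq> X" for S
  proof (rule finite_minimal_elements_msum_Nspan[OF assms(1,2)])
    show "S \<subseteq> msum B (Nspan F)" using that X by simp
    show "leP (preservants X) x y \<Longrightarrow> leP (preservants X) y x \<Longrightarrow> x = y" for x y
      by (rule leP_antisym[OF P])
    show "y - x \<in> Nspan F \<Longrightarrow> leP (preservants X) x y" for x y
      using Nspan_subset_preservants_msum[of F B] unfolding leP_def X by blast
  qed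
  then show ?thesis
    unfolding directed_hybridlinear_def directed_wqo_on_def
    using wf_strict_leP[OF \<open>X \<subseteq> natvecs\<close> P] directed_if_translates_intersect[OF X meet] by blast
qed (simp add: directed_hybridlinear_def directed_wqo_on_def)

theorem mainTheorem15:
  fixes X :: "(int ^ 'n::finite) set"
  assumes "hybridlinear X"
  shows "(directed_hybridlinear X \<longleftrightarrow>
           (\<exists>B F. finite B \<and> finite F \<and> B \<subseteq> natvecs \<and> F \<subseteq> natvecs \<and> X = msum B (Nspan F)
              \<and> (\<forall>b\<in>B. \<forall>b'\<in>B. msum {b} (Nspan F) \<inter> msum {b'} (Nspan F) \<noteq> {})))
       \<and> (directed_hybridlinear X \<longleftrightarrow>
           (\<exists>B F. finite B \<and> finite F \<and> B \<subseteq> natvecs \<and> F \<subseteq> natvecs \<and> X = msum B (Nspan F)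
              \<and> (\<forall>b\<in>B. \<forall>b'\<in>B. b - b' \<in> Zspan F)))"
    (is "(_ \<longleftrightarrow> ?meet) \<and> (_ \<longleftrightarrow> ?Zspan)")
proof -
  have meet_iff: "?meet \<longleftrightarrow> ?Zspan"
    by (simp only: translates_intersect_iff_diff_Zspan)
  obtain B F where B: "finite B" "B \<subseteq> natvecs" and F: "finite F" "F \<subseteq> natvecs"
    and X: "X = msum B (Nspan F)"
    using assms unfolding hybridlinear_def by blast
  have "?Zspan" if "directed_hybridlinear X"
  proof -
    have "\<forall>x\<in>X. \<forall>y\<in>X. \<exists>z\<in>X. leP (preservants X) x z \<and> leP (preservants X) y z"
      using that unfolding directed_hybridlinear_def directed_wqo_on_def by blast
    then show ?thesis using directed_imp_Zspan_representation[OF B F X] B by blast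
  qed
  moreover have "?meet \<Longrightarrow> directed_hybridlinear X"
    using directed_hybridlinear_if_translates_intersect by blast
  ultimately show ?thesis using meet_iff by blast
qed

end
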